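(* Let $r \geq 1$ be an integer. Then for every integer $n \geq 0$, $$\sum_{k=0}^{n} (-1)^k \frac{k!}{k+r}\, S(n,k) = \frac{1}{(r-1)!} \sum_{k=0}^{r-1} |s(r,k+1)|\, B_{n+k}.$$
   Context: For $n \geq 0$, $X^{\underline{n}} := X(X-1)\cdots(X-n+1)$ ($X^{\underline{0}}=1$). The (signed) Stirling numbers of the first kind $s(n,k)$ are defined by $X^{\underline{n}} = \sum_{k=0}^{n} s(n,k) X^k$, and the Stirling numbers of the second kind $S(n,k)$ by $X^n = \sum_{k=0}^{n} S(n,k) X^{\underline{k}}$ (for all $n\ge 0$), with $s(n,k)=S(n,k)=0$ when $n<k$. The Bernoulli numbers $B_n$ are defined by $\frac{t}{e^t-1} = \sum_{n\ge 0} B_n \frac{t^n}{n!}$. *)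

theory Defs
  imports "HOL-Combinatorics.Stirling" "HOL-Computational_Algebra.Formal_Power_Series"
begin

text \<open>Bernoulli numbers, defined by the exponential generating function
  t / (e^t - 1) = sum_n B_n t^n / n!  (so B_1 = -1/2).\<close>
definition bernoulli_egf :: "real fps" where
  "bernoulli_egf = fps_X / (fps_exp 1 - 1)"

definition bernoulli :: "nat \<Rightarrow> real" where
  "bernoulli n = fact n * fps_nth bernoulli_egf n"

text \<open>Signed Stirling numbers of the first kind, as in the paper:
  X(X-1)...(X-n+1) = sum_k s(n,k) X^k.  The library's unsigned
  stirling n k satisfies |s(n,k)| = stirling n k.\<close>
definition stirling1_signed :: "nat \<Rightarrow> nat \<Rightarrow> int" where
  "stirling1_signed n k = (-1) ^ (n - k) * int (stirling n k)"

lemma bernoulli_sanity: "fps_nth (fps_X :: real fps) 1 = 1" by simp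

end

theory Submission
  imports Defs
begin

(* Write L r n for the left-hand side. The Bernoulli numbers are the unique solution of
   sum (i<=m) C(m+1,i) B_i = [m = 0], i.e. of B(t) (e^t - 1) = t; exchanging the two sums and
   using S(m+1,k+1) = sum_j C(m,j) S(j,k) shows that L 1 solves it, so B_n = L 1 n.
   The recurrence S(n+1,k) = k S(n,k) + S(n,k-1) gives r L (r+1) n = L r (n+1) + r L r n,
   and this is exactly the recurrence |s(r+1,k+1)| = r |s(r,k+1)| + |s(r,k)| once
   (r-1)! L r n is expanded in Bernoulli numbers; induction on r concludes. *)

unbundle fps_syntax

lemma sum_Stirling_Suc:
  fixes a :: "nat \<Rightarrow> 'a::comm_semiring_1"
  shows "(\<Sum>k\<le>Suc n. a k * of_nat (Stirling (Suc n) k))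
       = (\<Sum>k\<le>n. (of_nat k * a k + a (Suc k)) * of_nat (Stirling n k))"
proof -
  have "(\<Sum>k\<le>Suc n. a k * of_nat (Stirling (Suc n) k))
      = (\<Sum>k\<le>n. a (Suc k) * of_nat (Suc k) * of_nat (Stirling n (Suc k)))
        + (\<Sum>k\<le>n. a (Suc k) * of_nat (Stirling n k))"
    by (subst sum.atMost_Suc_shift) (simp add: sum.distrib[symmetric] algebra_simps)
  also have "(\<Sum>k\<le>n. a (Suc k) * of_nat (Suc k) * of_nat (Stirling n (Suc k)))
           = (\<Sum>k\<le>Suc n. of_nat k * a k * of_nat (Stirling n k))"
    by (subst sum.atMost_Suc_shift) (simp add: algebra_simps)
  also have "\<dots> = (\<Sum>k\<le>n. of_nat k * a k * of_nat (Stirling n k))"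
    by simp
  finally show ?thesis
    by (simp add: sum.distrib[symmetric] algebra_simps)
qed

lemma sum_binomial_Suc:
  fixes f :: "nat \<Rightarrow> 'a::comm_semiring_1"
  shows "(\<Sum>j\<le>Suc m. of_nat (Suc m choose j) * f j)
       = (\<Sum>j\<le>m. of_nat (m choose j) * (f j + f (Suc j)))"
proof -
  have "(\<Sum>j\<le>Suc m. of_nat (Suc m choose j) * f j)
      = f 0 + (\<Sum>j\<le>m. of_nat (m choose Suc j) * f (Suc j))
        + (\<Sum>j\<le>m. of_nat (m choose j) * f (Suc j))"
    by (subst sum.atMost_Suc_shift) (simp add: sum.distrib algebra_simps)
  also have "f 0 + (\<Sum>j\<le>m. of_nat (m choose Suc j) * f (Suc j))
           = (\<Sum>j\<le>Suc m. of_nat (m choose j) * f j)"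
    by (subst sum.atMost_Suc_shift) simp
  also have "\<dots> = (\<Sum>j\<le>m. of_nat (m choose j) * f j)"
    by (simp add: binomial_eq_0)
  finally show ?thesis
    by (simp add: sum.distrib algebra_simps)
qed

lemma Stirling_Suc_Suc_eq_sum_binomial:
  "Stirling (Suc m) (Suc k) = (\<Sum>j\<le>m. (m choose j) * Stirling j k)"
proof (induction m arbitrary: k)
  case 0
  show ?case by (cases k) auto
next
  case (Suc m)
  show ?case
  proof (cases k)
    case 0
    have "(\<Sum>j\<le>Suc m. (Suc m choose j) * Stirling j 0) = (\<Sum>j\<le>Suc m. if j = 0 then 1 else 0)"
      by (intro sum.cong refl) (auto simp: gr0_conv_Suc)
    then show ?thesis
      using 0 by (simp del: Stirling.simps)
  next
    case (Suc k')
    have "Stirling (Suc (Suc m)) (Suc k) = Suc k * Stirling (Suc m) (Suc k) + Stirling (Suc m) k"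
      by simp
    also have "\<dots> = (\<Sum>j\<le>m. (m choose j) * (Suc k * Stirling j k + Stirling j k'))"
      using Suc.IH[of k] Suc.IH[of k'] Suc
      by (simp add: sum_distrib_left sum.distrib algebra_simps del: Stirling.simps)
    also have "\<dots> = (\<Sum>j\<le>m. (m choose j) * (Stirling j k + Stirling (Suc j) k))"
      using Suc by (simp add: algebra_simps)
    also have "\<dots> = (\<Sum>j\<le>Suc m. (Suc m choose j) * Stirling j k)"
      using sum_binomial_Suc[of m "\<lambda>j. Stirling j k"] by simp
    finally show ?thesis .
  qed
qed

lemma sum_binomial_Stirling:
  "(\<Sum>i\<le>m. (Suc m choose i) * Stirling i k) = Suc k * Stirling (Suc m) (Suc k)"
  using Stirling_Suc_Suc_eq_sum_binomial[of "Suc m" k] by simp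

lemma sum_alternating_fact_Stirling:
  "(\<Sum>k\<le>n. (-1) ^ k * fact k * of_nat (Stirling (Suc n) (Suc k)) :: 'a::{comm_ring_1,ring_char_0})
     = (if n = 0 then 1 else 0)"
proof -
  define g :: "nat \<Rightarrow> 'a" where "g k = - ((-1) ^ k * fact k * of_nat (Stirling n k))" for k
  have "(\<Sum>k\<le>n. (-1) ^ k * fact k * of_nat (Stirling (Suc n) (Suc k)) :: 'a)
      = (\<Sum>k<Suc n. g (Suc k) - g k)"
    unfolding g_def by (intro sum.cong) (auto simp: algebra_simps)
  also have "\<dots> = - g 0"
    unfolding sum_lessThan_telescope by (simp add: g_def)
  finally show ?thesis
    by (cases n) (simp_all add: g_def)
qed

lemma bernoulli_eqI:
  assumes rec: "\<And>m. (\<Sum>i\<le>m. of_nat (Suc m choose i) * b i) = (if m = 0 then 1 else 0)"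
  shows "bernoulli n = b n"
proof -
  define F where "F = Abs_fps (\<lambda>i. b i / fact i)"
  define E where "E = (fps_exp 1 - 1 :: real fps)"
  have E_nth: "E $ j = (if j = 0 then 0 else 1 / fact j)" for j
    by (simp add: E_def fps_exp_def)
  have "F * E = fps_X"
  proof (rule fps_ext)
    fix N
    show "(F * E) $ N = fps_X $ N"
    proof (cases N)
      case 0
      then show ?thesis
        by (simp add: E_nth)
    next
      case (Suc m)
      have "(F * E) $ N = (\<Sum>i\<le>Suc m. b i / fact i * E $ (Suc m - i))"
        by (simp add: fps_mult_nth F_def Suc atLeast0AtMost)
      also have "\<dots> = (\<Sum>i\<le>m. of_nat (Suc m choose i) * b i) / fact (Suc m)"
        by (simp add: E_nth sum_divide_distrib binomial_fact Suc_diff_le mult_ac)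
      also have "\<dots> = fps_X $ N"
        by (simp add: rec Suc)
      finally show ?thesis .
    qed
  qed
  moreover have "E \<noteq> 0"
    using E_nth[of 1] by auto
  ultimately have "bernoulli_egf = F"
    unfolding bernoulli_egf_def E_def[symmetric] by (metis nonzero_mult_div_cancel_right)
  then have "bernoulli_egf $ n = F $ n"
    by (rule arg_cong)
  then show ?thesis
    by (simp add: bernoulli_def F_def)
qed

definition stirling_frac_sum :: "nat \<Rightarrow> nat \<Rightarrow> real" where
  "stirling_frac_sum r n = (\<Sum>k\<le>n. (-1) ^ k * fact k / real (k + r) * real (Stirling n k))"

lemma bernoulli_eq_stirling_frac_sum_1: "bernoulli n = stirling_frac_sum 1 n"
proof (rule bernoulli_eqI)
  fix m
  define c :: "nat \<Rightarrow> real" where "c k = (-1) ^ k * fact k / real (k + 1)" for k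
  have "stirling_frac_sum 1 i = (\<Sum>k\<le>m. c k * real (Stirling i k))" if "i \<le> m" for i
    unfolding stirling_frac_sum_def c_def
    by (rule sum.mono_neutral_left) (use that in auto)
  then have "(\<Sum>i\<le>m. real (Suc m choose i) * stirling_frac_sum 1 i)
      = (\<Sum>i\<le>m. \<Sum>k\<le>m. real (Suc m choose i) * (c k * real (Stirling i k)))"
    by (simp add: sum_distrib_left)
  also have "\<dots> = (\<Sum>k\<le>m. c k * real (\<Sum>i\<le>m. (Suc m choose i) * Stirling i k))"
    by (subst sum.swap) (simp add: sum_distrib_left mult_ac)
  also have "\<dots> = (\<Sum>k\<le>m. (-1) ^ k * fact k * real (Stirling (Suc m) (Suc k)))"
    unfolding sum_binomial_Stirling
    by (intro sum.cong refl) (simp add: c_def field_simps del: Stirling.simps)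
  also have "\<dots> = (if m = 0 then 1 else 0)"
    by (rule sum_alternating_fact_Stirling)
  finally show "(\<Sum>i\<le>m. real (Suc m choose i) * stirling_frac_sum 1 i) = (if m = 0 then 1 else 0)" .
qed

lemma stirling_frac_sum_Suc:
  assumes "r > 0"
  shows "real r * stirling_frac_sum (Suc r) n = stirling_frac_sum r (Suc n) + real r * stirling_frac_sum r n"
proof -
  define a where "a k = (-1) ^ k * fact k / real (k + r)" for k
  have term_eq: "real r * ((-1) ^ k * fact k / real (k + Suc r)) = real k * a k + a (Suc k) + real r * a k"
    for k
  proof -
    define x :: real where "x = (-1) ^ k * fact k"
    have "a k = x / (real k + real r)" and "a (Suc k) = - (real k + 1) * x / (real k + real r + 1)"
      by (simp_all add: a_def x_def algebra_simps)
    moreover have "real k + real r > 0"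
      using assms by simp
    ultimately show ?thesis
      unfolding x_def[symmetric] by (simp add: field_simps)
  qed
  have "real r * stirling_frac_sum (Suc r) n
      = (\<Sum>k\<le>n. (real k * a k + a (Suc k) + real r * a k) * real (Stirling n k))"
    unfolding stirling_frac_sum_def sum_distrib_left
    by (intro sum.cong refl) (simp only: term_eq[symmetric] mult.assoc)
  also have "\<dots> = stirling_frac_sum r (Suc n) + real r * stirling_frac_sum r n"
    using sum_Stirling_Suc[of a n]
    by (simp add: stirling_frac_sum_def a_def sum_distrib_left sum.distrib algebra_simps)
  finally show ?thesis .
qed

lemma sum_stirling_Suc_Suc:
  fixes b :: "nat \<Rightarrow> 'a::comm_semiring_1"
  shows "(\<Sum>k\<le>Suc q. of_nat (stirling (Suc (Suc q)) (Suc k)) * b k)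
       = of_nat (Suc q) * (\<Sum>k\<le>q. of_nat (stirling (Suc q) (Suc k)) * b k)
         + (\<Sum>k\<le>q. of_nat (stirling (Suc q) (Suc k)) * b (Suc k))"
proof -
  have "(\<Sum>k\<le>Suc q. of_nat (stirling (Suc (Suc q)) (Suc k)) * b k)
      = of_nat (Suc q) * (\<Sum>k\<le>Suc q. of_nat (stirling (Suc q) (Suc k)) * b k)
        + (\<Sum>k\<le>Suc q. of_nat (stirling (Suc q) k) * b k)"
    by (simp add: sum.distrib sum_distrib_left algebra_simps)
  also have "(\<Sum>k\<le>Suc q. of_nat (stirling (Suc q) k) * b k)
           = (\<Sum>k\<le>q. of_nat (stirling (Suc q) (Suc k)) * b (Suc k))"
    by (subst sum.atMost_Suc_shift) simp
  finally show ?thesis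
    by simp
qed

lemma fact_mult_stirling_frac_sum:
  "fact q * stirling_frac_sum (Suc q) n = (\<Sum>k\<le>q. real (stirling (Suc q) (Suc k)) * bernoulli (n + k))"
proof (induction q arbitrary: n)
  case 0
  show ?case
    by (simp add: bernoulli_eq_stirling_frac_sum_1)
next
  case (Suc q)
  have "fact (Suc q) * stirling_frac_sum (Suc (Suc q)) n
      = fact q * (real (Suc q) * stirling_frac_sum (Suc (Suc q)) n)"
    by simp
  also have "\<dots> = fact q * stirling_frac_sum (Suc q) (Suc n)
                 + real (Suc q) * (fact q * stirling_frac_sum (Suc q) n)"
    by (subst stirling_frac_sum_Suc) (simp_all add: algebra_simps)
  also have "\<dots> = (\<Sum>k\<le>Suc q. real (stirling (Suc (Suc q)) (Suc k)) * bernoulli (n + k))"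
    unfolding Suc.IH sum_stirling_Suc_Suc by (simp add: add.commute)
  finally show ?case .
qed

theorem theorem5:
  fixes r n :: nat
  assumes "r \<ge> 1"
  shows "(\<Sum>k\<le>n. (-1) ^ k * fact k / real (k + r) * real (Stirling n k))
       = 1 / fact (r - 1) * (\<Sum>k\<le>r - 1. \<bar>real_of_int (stirling1_signed r (k + 1))\<bar> * bernoulli (n + k))"
proof -
  obtain q where r: "r = Suc q"
    using assms by (cases r) auto
  have "\<bar>real_of_int (stirling1_signed r (k + 1))\<bar> = real (stirling r (Suc k))" for k
    by (simp add: stirling1_signed_def abs_mult)
  then show ?thesis
    using fact_mult_stirling_frac_sum[of q n]
    by (simp add: r stirling_frac_sum_def field_simps)
qed

end
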